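(* Let $u\ge1$ and let $Z\subseteq\{0,1,\dots,u\}$ be a finite set of integers, partitioned as $Z=Z^{(1)}\cup Z^{(2)}$ with $Z^{(1)}\cap Z^{(2)}=\emptyset$. Set $\mu:=\max(Z)/u$ and assume $\mu\le1/16$. Then for every $0\le\epsilon\le1/4$, \[ \Big|\mathcal{S}\big(Z^{(1)},(1+\epsilon)\tfrac u2\big)\Big|+\Big|\mathcal{S}\big(Z^{(2)},(1+\epsilon)\tfrac u2\big)\Big|\;\le\;\frac{|\mathcal{S}(Z,u)|+1}{1-2\epsilon-4\mu}. \]
   Context: For a finite set $X$ of integers and a real $t$, $\mathcal{S}(X,t)=\{\Sigma(Y): Y\subseteq X,\ \Sigma(Y)\le t\}$, where $\Sigma(Y)=\sum_{y\in Y}y$ (so $0=\Sigma(\emptyset)\in\mathcal{S}(X,t)$ for $t\ge0$). *)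

theory Defs
  imports Complex_Main
begin

definition subsetSums :: "int set \<Rightarrow> real \<Rightarrow> int set" where
  "subsetSums X t = {\<Sum>Y | Y. Y \<subseteq> X \<and> real_of_int (\<Sum>Y) \<le> t}"

end

theory Submission imports Defs begin

(*
  Write t = (1 + eps) u / 2 and L = u - t, so that t + L = u.  Adding the largest element of
  S(X,s) to the positive elements of S(Y,r) places them in S(X u Y, s + r) above S(X,s), so
  |S(X,s)| + |S(Y,r)| <= |S(X u Y, s + r)| + 1.  With (Z1,t; Z2,L) this settles the case
  Sum Z2 <= L.  Otherwise (Z2,t; Z1,L) leaves as excess the set M of sums of Z1 in the window
  (L,t] of width eps u.  Since the elements of Z2 are at most D = max Z, subsets of Z2 realise
  sums b_0 < ... < b_(k-1) <= L spaced at least eps u apart, with k about L / (eps u + D); the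
  translates M + b_i are disjoint and lie in S(Z,u), so k |M| <= |S(Z,u)|, and this trade-off
  produces the factor 1 - 2 eps - 4 mu.
*)

lemma mem_subsetSums_iff:
  "v \<in> subsetSums X t \<longleftrightarrow> (\<exists>Y\<subseteq>X. v = \<Sum>Y \<and> real_of_int v \<le> t)"
  by (auto simp: subsetSums_def)

lemma finite_subsetSums: "finite X \<Longrightarrow> finite (subsetSums X t)"
proof -
  assume "finite X"
  have "subsetSums X t \<subseteq> sum (\<lambda>x. x) ` Pow X" by (auto simp: subsetSums_def)
  with \<open>finite X\<close> show ?thesis by (meson finite_Pow_iff finite_imageI finite_subset)
qed

lemma zero_in_subsetSums: "0 \<le> t \<Longrightarrow> 0 \<in> subsetSums X t"
  unfolding mem_subsetSums_iff by (intro exI[of _ "{}"]) auto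

lemma subsetSums_nonneg: "\<forall>x\<in>X. 0 \<le> x \<Longrightarrow> v \<in> subsetSums X t \<Longrightarrow> 0 \<le> v"
  unfolding mem_subsetSums_iff by (auto intro!: sum_nonneg)

lemma subsetSums_le_sum:
  "finite X \<Longrightarrow> \<forall>x\<in>X. 0 \<le> x \<Longrightarrow> v \<in> subsetSums X t \<Longrightarrow> v \<le> \<Sum>X"
  unfolding mem_subsetSums_iff by (auto intro!: sum_mono2)

lemma subsetSums_le_bound: "v \<in> subsetSums X t \<Longrightarrow> real_of_int v \<le> t"
  unfolding mem_subsetSums_iff by auto

lemma subsetSums_mono: "X \<subseteq> X' \<Longrightarrow> t \<le> t' \<Longrightarrow> subsetSums X t \<subseteq> subsetSums X' t'"
  unfolding subsetSums_def by fastforce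

lemma subsetSums_lower_bound:
  "s \<le> t \<Longrightarrow> subsetSums X s = {v \<in> subsetSums X t. real_of_int v \<le> s}"
  unfolding subsetSums_def by auto

lemma subsetSums_add:
  assumes "X \<inter> Y = {}" "finite X" "finite Y"
    and "a \<in> subsetSums X s" "b \<in> subsetSums Y r" "real_of_int (a + b) \<le> w"
  shows "a + b \<in> subsetSums (X \<union> Y) w"
proof -
  obtain V where V: "V \<subseteq> X" "a = \<Sum>V" using assms(4) unfolding mem_subsetSums_iff by blast
  obtain W where W: "W \<subseteq> Y" "b = \<Sum>W" using assms(5) unfolding mem_subsetSums_iff by blast
  have "\<Sum>(V \<union> W) = a + b"
    using V W assms(1-3) by (subst sum.union_disjoint) (auto intro: finite_subset)
  with V W assms(6) show ?thesis
    unfolding mem_subsetSums_iff by (intro exI[of _ "V \<union> W"]) auto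
qed

lemma card_subsetSums_split:
  assumes "finite X" "L \<le> t"
  shows "card (subsetSums X t) = card (subsetSums X L) + card {a \<in> subsetSums X t. L < real_of_int a}"
proof -
  have "subsetSums X t = subsetSums X L \<union> {a \<in> subsetSums X t. L < real_of_int a}"
    using subsetSums_lower_bound[OF assms(2)] by auto
  moreover have "subsetSums X L \<inter> {a \<in> subsetSums X t. L < real_of_int a} = {}"
    using subsetSums_le_bound by fastforce
  ultimately show ?thesis
    using finite_subsetSums[OF assms(1)] by (metis (no_types, lifting) card_Un_disjoint finite_Un)
qed

lemma card_add_Max_translate_le:
  fixes P Q R :: "int set"
  assumes "finite P" "P \<noteq> {}" "finite Q" "Q \<subseteq> {0<..}" "P \<union> (+) (Max P) ` Q \<subseteq> R" "finite R"
  shows "card P + card Q \<le> card R"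
proof -
  have "P \<inter> (+) (Max P) ` Q = {}"
    using assms(1,2,4) Max_ge by fastforce
  then have "card (P \<union> (+) (Max P) ` Q) = card P + card Q"
    using assms(1,3) by (simp add: card_Un_disjoint card_image)
  with card_mono[OF assms(6,5)] show ?thesis by simp
qed

lemma card_subsetSums_union_le:
  assumes "X \<inter> Y = {}" "finite X" "finite Y" "\<forall>y\<in>Y. 0 \<le> y" "0 \<le> s" "0 \<le> r"
  shows "card (subsetSums X s) + card (subsetSums Y r) \<le> card (subsetSums (X \<union> Y) (s + r)) + 1"
proof -
  let ?P = "subsetSums X s" and ?Q = "subsetSums Y r - {0}"
  have P: "finite ?P" "0 \<in> ?P" and "0 \<in> subsetSums Y r" "finite (subsetSums Y r)"
    using assms by (auto simp: finite_subsetSums zero_in_subsetSums)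
  then have "Max ?P \<in> ?P" by (intro Max_in) auto
  then have "Max ?P + q \<in> subsetSums (X \<union> Y) (s + r)" if "q \<in> ?Q" for q
    using that assms(1-3) subsetSums_le_bound[of "Max ?P"] subsetSums_le_bound[of q]
    by (intro subsetSums_add) (auto intro: add_mono)
  moreover have "?P \<subseteq> subsetSums (X \<union> Y) (s + r)"
    using assms(6) by (intro subsetSums_mono) auto
  moreover have "?Q \<subseteq> {0<..}"
    using assms(4) subsetSums_nonneg by force
  ultimately have "card ?P + card ?Q \<le> card (subsetSums (X \<union> Y) (s + r))"
    using P \<open>finite (subsetSums Y r)\<close> assms(2,3)
    by (intro card_add_Max_translate_le) (auto simp: finite_subsetSums)
  moreover have "card ?Q + 1 = card (subsetSums Y r)"
    using \<open>0 \<in> subsetSums Y r\<close> \<open>finite (subsetSums Y r)\<close> card_Suc_Diff1 by fastforce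
  ultimately show ?thesis by linarith
qed

lemma subset_sum_in_window:
  fixes X :: "int set" and D :: int and y :: real
  assumes "finite X" "\<forall>x\<in>X. 0 \<le> x \<and> x \<le> D" "0 \<le> D" "0 \<le> y" "y \<le> real_of_int (\<Sum>X)"
  shows "\<exists>Y\<subseteq>X. y \<le> real_of_int (\<Sum>Y) \<and> real_of_int (\<Sum>Y) \<le> y + real_of_int D"
  using assms
proof (induction X arbitrary: y rule: finite_induct)
  case empty
  then show ?case by (intro exI[of _ "{}"]) auto
next
  case (insert x F)
  show ?case
  proof (cases "y \<le> real_of_int (\<Sum>F)")
    case True
    then obtain Y where "Y \<subseteq> F" "y \<le> real_of_int (\<Sum>Y) \<and> real_of_int (\<Sum>Y) \<le> y + real_of_int D"
      using insert.IH[of y] insert.prems by auto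
    then show ?thesis by (intro exI[of _ Y]) auto
  next
    case False
    with insert show ?thesis by (intro exI[of _ "insert x F"]) auto
  qed
qed

lemma card_disjoint_translates_le:
  fixes M R :: "int set" and b :: "nat \<Rightarrow> int" and w :: real
  assumes "finite R"
    and "\<And>a a'. a \<in> M \<Longrightarrow> a' \<in> M \<Longrightarrow> real_of_int (a - a') < w"
    and "\<And>i j. i < j \<Longrightarrow> j < k \<Longrightarrow> w \<le> real_of_int (b j - b i)"
    and "\<And>i. i < k \<Longrightarrow> (+) (b i) ` M \<subseteq> R"
  shows "k * card M \<le> card R"
proof (cases "finite M")
  case True
  have disjoint: "(+) (b i) ` M \<inter> (+) (b j) ` M = {}" if "i < j" "j < k" for i j
  proof -
    have "b i + a \<noteq> b j + a'" if "a \<in> M" "a' \<in> M" for a a'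
      using assms(2)[OF that] assms(3)[OF \<open>i < j\<close> \<open>j < k\<close>] by auto
    then show ?thesis by auto
  qed
  have "k * card M = (\<Sum>i<k. card ((+) (b i) ` M))"
    by (simp add: card_image)
  also have "\<dots> = card (\<Union>i<k. (+) (b i) ` M)"
  proof (rule card_UN_disjoint[symmetric])
    show "\<forall>i\<in>{..<k}. \<forall>j\<in>{..<k}. i \<noteq> j \<longrightarrow> (+) (b i) ` M \<inter> (+) (b j) ` M = {}"
      using disjoint by (metis Int_commute lessThan_iff linorder_neqE_nat)
  qed (use True in auto)
  also have "\<dots> \<le> card R"
    using assms(1,4) by (intro card_mono) auto
  finally show ?thesis .
qed simp

lemma card_upper_subsetSums_mult_le:
  fixes X Y :: "int set" and D :: int and L t :: real
  assumes "X \<inter> Y = {}" "finite X" "finite Y" "\<forall>y\<in>Y. 0 \<le> y \<and> y \<le> D" "0 \<le> D"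
    and "real_of_int D \<le> L" "L < t" "L - real_of_int D \<le> real_of_int (\<Sum>Y)"
  obtains k :: nat where "t < (real k + 1) * (t - L + real_of_int D)"
    and "k * card {a \<in> subsetSums X t. L < real_of_int a} \<le> card (subsetSums (X \<union> Y) (t + L))"
proof -
  define h where "h = t - L + real_of_int D"
  define k where "k = nat \<lfloor>(L - real_of_int D) / h\<rfloor> + 1"
  have "h > 0" using assms(5,7) unfolding h_def by simp
  have steps_le: "real i * h \<le> L - real_of_int D" if "i < k" for i
  proof -
    have "0 \<le> (L - real_of_int D) / h" using assms(6) \<open>h > 0\<close> by simp
    then have "real i \<le> (L - real_of_int D) / h"
      using that unfolding k_def by linarith
    then show ?thesis using \<open>h > 0\<close> by (simp add: pos_le_divide_eq)
  qed
  have "\<exists>W\<subseteq>Y. real i * h \<le> real_of_int (\<Sum>W) \<and> real_of_int (\<Sum>W) \<le> real i * h + real_of_int D"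
    if "i < k" for i
    using subset_sum_in_window[OF assms(3,4,5)] steps_le[OF that] assms(8) \<open>h > 0\<close> by simp
  then obtain W where W: "\<And>i. i < k \<Longrightarrow> W i \<subseteq> Y \<and> real i * h \<le> real_of_int (\<Sum>(W i))
      \<and> real_of_int (\<Sum>(W i)) \<le> real i * h + real_of_int D"
    by metis
  define b where "b i = \<Sum>(W i)" for i
  have "t < (real k + 1) * h"
  proof -
    have "(L - real_of_int D) / h < real k" unfolding k_def by linarith
    then have "L - real_of_int D < real k * h" using \<open>h > 0\<close> by (simp add: divide_less_eq)
    then show ?thesis unfolding h_def by (simp add: algebra_simps)
  qed
  moreover have "k * card {a \<in> subsetSums X t. L < real_of_int a} \<le> card (subsetSums (X \<union> Y) (t + L))"
  proof (rule card_disjoint_translates_le[where w = "t - L"])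
    show "finite (subsetSums (X \<union> Y) (t + L))"
      using assms(2,3) by (simp add: finite_subsetSums)
  next
    fix a a' assume "a \<in> {a \<in> subsetSums X t. L < real_of_int a}" "a' \<in> {a \<in> subsetSums X t. L < real_of_int a}"
    then show "real_of_int (a - a') < t - L" using subsetSums_le_bound[of a X t] by auto
  next
    fix i j assume "i < j" "j < k"
    then have "real_of_int (b i) \<le> real i * h + real_of_int D" "real j * h \<le> real_of_int (b j)"
      using W unfolding b_def by auto
    moreover have "(real i + 1) * h \<le> real j * h"
      using \<open>i < j\<close> \<open>h > 0\<close> by (intro mult_right_mono) auto
    ultimately show "t - L \<le> real_of_int (b j - b i)"
      unfolding h_def by (simp add: algebra_simps)
  next
    fix i assume "i < k"
    then have "b i \<in> subsetSums Y L"
      using W[OF \<open>i < k\<close>] steps_le[OF \<open>i < k\<close>] unfolding b_def mem_subsetSums_iff by auto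
    then have "a + b i \<in> subsetSums (X \<union> Y) (t + L)" if "a \<in> subsetSums X t" "L < real_of_int a" for a
      using that assms(1-3) subsetSums_le_bound[of a X t] subsetSums_le_bound[of "b i" Y L]
      by (intro subsetSums_add) auto
    then show "(+) (b i) ` {a \<in> subsetSums X t. L < real_of_int a} \<subseteq> subsetSums (X \<union> Y) (t + L)"
      by (auto simp: add.commute)
  qed
  ultimately show ?thesis using that unfolding h_def by blast
qed

lemma mult_one_minus_le_of_translate_count:
  fixes N S m k c :: real
  assumes "N \<le> S + 1 + m" "k * m \<le> S" "1 \<le> (k + 1) * c" "0 \<le> N" "0 \<le> k"
  shows "N * (1 - c) \<le> S + 1"
proof -
  have "N * (1 - c) * (k + 1) \<le> N * k"
    using mult_left_mono[OF assms(3) assms(4)] by (simp add: algebra_simps)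
  also have "\<dots> \<le> (S + 1 + m) * k"
    using mult_right_mono[OF assms(1) assms(5)] .
  also have "\<dots> \<le> (S + 1) * (k + 1)"
    using assms(2) by (simp add: algebra_simps)
  finally show ?thesis
    using assms(5) by (simp add: mult_le_cancel_right_pos)
qed

lemma card_subsetSums_pair_le_of_sum_le:
  assumes "X \<inter> Y = {}" "finite X" "finite Y" "\<forall>y\<in>Y. 0 \<le> y" "0 \<le> L" "L \<le> t"
    and "real_of_int (\<Sum>Y) \<le> L"
  shows "card (subsetSums X t) + card (subsetSums Y t) \<le> card (subsetSums (X \<union> Y) (t + L)) + 1"
proof -
  have "real_of_int v \<le> L" if "v \<in> subsetSums Y t" for v
  proof -
    have "v \<le> \<Sum>Y" using subsetSums_le_sum[OF assms(3,4) that] .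
    with assms(7) show ?thesis by (meson of_int_le_iff order_trans)
  qed
  then have "subsetSums Y t \<subseteq> subsetSums Y L"
    using subsetSums_lower_bound[OF assms(6), of Y] by blast
  then have "card (subsetSums Y t) \<le> card (subsetSums Y L)"
    using assms(3) by (intro card_mono) (auto simp: finite_subsetSums)
  moreover have "card (subsetSums X t) + card (subsetSums Y L) \<le> card (subsetSums (X \<union> Y) (t + L)) + 1"
    using assms(1-6) by (intro card_subsetSums_union_le) auto
  ultimately show ?thesis by linarith
qed

lemma card_subsetSums_pair_le_upper:
  assumes "X \<inter> Y = {}" "finite X" "finite Y" "\<forall>x\<in>X. 0 \<le> x" "0 \<le> L" "L \<le> t"
  shows "card (subsetSums X t) + card (subsetSums Y t)
           \<le> card (subsetSums (X \<union> Y) (t + L)) + 1 + card {a \<in> subsetSums X t. L < real_of_int a}"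
proof -
  have "card (subsetSums Y t) + card (subsetSums X L) \<le> card (subsetSums (X \<union> Y) (t + L)) + 1"
    using card_subsetSums_union_le[of Y X t L] assms by (auto simp: Un_commute Int_commute)
  moreover have "card (subsetSums X t) = card (subsetSums X L) + card {a \<in> subsetSums X t. L < real_of_int a}"
    using assms(2,6) by (rule card_subsetSums_split)
  ultimately show ?thesis by linarith
qed

lemma card_subsetSums_pair_le:
  fixes X Y :: "int set" and D :: int and L t c :: real
  assumes "X \<inter> Y = {}" "finite X" "finite Y" "\<forall>x\<in>X \<union> Y. 0 \<le> x \<and> x \<le> D" "0 \<le> D"
    and "real_of_int D \<le> L" "L \<le> t" "0 \<le> c" "t - L + real_of_int D \<le> c * t"
  shows "(real (card (subsetSums X t)) + real (card (subsetSums Y t))) * (1 - c)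
           \<le> real (card (subsetSums (X \<union> Y) (t + L))) + 1"
proof -
  define M where "M = {a \<in> subsetSums X t. L < real_of_int a}"
  let ?N = "card (subsetSums X t) + card (subsetSums Y t)" and ?S = "card (subsetSums (X \<union> Y) (t + L))"
  have "0 \<le> L" using assms(5,6) by linarith
  have upper: "?N \<le> ?S + 1 + card M"
    unfolding M_def using assms \<open>0 \<le> L\<close> by (intro card_subsetSums_pair_le_upper) auto
  show ?thesis
  proof (cases "real_of_int (\<Sum>Y) \<le> L \<or> M = {}")
    case True
    then have "?N \<le> ?S + 1"
    proof
      assume "real_of_int (\<Sum>Y) \<le> L"
      with assms(1-4) \<open>0 \<le> L\<close> assms(7) show ?thesis
        by (intro card_subsetSums_pair_le_of_sum_le) auto
    qed (use upper in simp)
    then have "real ?N \<le> real (?S + 1)" by (rule of_nat_mono)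
    moreover have "real ?N * (1 - c) \<le> real ?N"
      using assms(8) by (simp add: mult_left_le)
    ultimately show ?thesis by simp
  next
    case False
    then have "L < t" using subsetSums_le_bound unfolding M_def by force
    have "L - real_of_int D \<le> real_of_int (\<Sum>Y)" using False assms(5) by linarith
    with \<open>L < t\<close> obtain k :: nat where k: "t < (real k + 1) * (t - L + real_of_int D)"
      and "k * card M \<le> ?S"
      using card_upper_subsetSums_mult_le[OF assms(1-3) _ assms(5,6)] assms(4)
      unfolding M_def by blast
    have "t < (real k + 1) * c * t"
    proof -
      have "(real k + 1) * (t - L + real_of_int D) \<le> (real k + 1) * (c * t)"
        using assms(9) by (intro mult_left_mono) auto
      with k show ?thesis unfolding mult.assoc by (rule order_less_le_trans)
    qed
    moreover have "0 < t" using \<open>0 \<le> L\<close> \<open>L < t\<close> by linarith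
    ultimately have "1 \<le> (real k + 1) * c"
      by (metis less_eq_real_def mult_less_cancel_right_pos mult_1)
    moreover have "real k * real (card M) \<le> real ?S"
      using \<open>k * card M \<le> ?S\<close> by (metis of_nat_le_iff of_nat_mult)
    moreover have "real ?N \<le> real ?S + 1 + real (card M)"
      using upper by (metis of_nat_add of_nat_1 of_nat_le_iff)
    ultimately show ?thesis
      using mult_one_minus_le_of_translate_count[of "real ?N"] by simp
  qed
qed

lemma threshold_arithmetic:
  fixes u \<epsilon> \<mu> :: real
  assumes "0 < u" "0 \<le> \<epsilon>" "\<epsilon> \<le> 1/4" "0 \<le> \<mu>" "\<mu> \<le> 1/16"
  defines "t \<equiv> (1 + \<epsilon>) * u / 2"
  shows "\<mu> * u \<le> u - t" "u - t \<le> t" "t - (u - t) + \<mu> * u \<le> (2 * \<epsilon> + 4 * \<mu>) * t"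
proof -
  have "0 \<le> \<epsilon> * u" "\<epsilon> * u \<le> u / 4" "\<mu> * u \<le> u / 16"
    using assms(1-5) by (simp_all add: mult_right_mono)
  moreover have "u - t = u / 2 - \<epsilon> * u / 2" "t - (u - t) = \<epsilon> * u"
    unfolding t_def by (simp_all add: field_simps)
  ultimately show "\<mu> * u \<le> u - t" "u - t \<le> t" using assms(1) by linarith+
  have "(2 * \<epsilon> + 4 * \<mu>) * t - (t - (u - t) + \<mu> * u) = u * (\<mu> + \<epsilon> * \<epsilon> + 2 * \<mu> * \<epsilon>)"
    unfolding t_def by (simp add: field_simps)
  moreover have "0 \<le> u * (\<mu> + \<epsilon> * \<epsilon> + 2 * \<mu> * \<epsilon>)"
    using assms(1,2,4) by simp
  ultimately show "t - (u - t) + \<mu> * u \<le> (2 * \<epsilon> + 4 * \<mu>) * t" by linarith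
qed

theorem mainTheorem6:
  fixes u :: int and Z Z1 Z2 :: "int set" and \<epsilon> :: real
  assumes "u \<ge> 1"
    and "Z \<subseteq> {0..u}" and "Z \<noteq> {}"
    and "Z = Z1 \<union> Z2" and "Z1 \<inter> Z2 = {}"
    and "real_of_int (Max Z) / real_of_int u \<le> 1/16"
    and "0 \<le> \<epsilon>" and "\<epsilon> \<le> 1/4"
  shows "real (card (subsetSums Z1 ((1 + \<epsilon>) * real_of_int u / 2)))
           + real (card (subsetSums Z2 ((1 + \<epsilon>) * real_of_int u / 2)))
         \<le> (real (card (subsetSums Z (real_of_int u))) + 1)
           / (1 - 2 * \<epsilon> - 4 * (real_of_int (Max Z) / real_of_int u))"
proof -
  define t where "t = (1 + \<epsilon>) * real_of_int u / 2"
  define \<mu> where "\<mu> = real_of_int (Max Z) / real_of_int u"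
  have "finite Z" using assms(2) finite_subset by blast
  then have bounded: "\<forall>x\<in>Z1 \<union> Z2. 0 \<le> x \<and> x \<le> Max Z"
    using assms(2,4) Max_ge by auto
  have "0 \<le> Max Z"
    using Max_in[OF \<open>finite Z\<close> assms(3)] assms(2) by auto
  have "real_of_int u > 0" using assms(1) by simp
  then have D_eq: "real_of_int (Max Z) = \<mu> * real_of_int u" and "0 \<le> \<mu>" "\<mu> \<le> 1/16"
    unfolding \<mu>_def using \<open>0 \<le> Max Z\<close> assms(6) by auto
  note params = threshold_arithmetic[OF \<open>real_of_int u > 0\<close> assms(7,8) \<open>0 \<le> \<mu>\<close> \<open>\<mu> \<le> 1/16\<close>,
      folded t_def D_eq]
  have "(real (card (subsetSums Z1 t)) + real (card (subsetSums Z2 t))) * (1 - (2 * \<epsilon> + 4 * \<mu>))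
      \<le> real (card (subsetSums (Z1 \<union> Z2) (t + (real_of_int u - t)))) + 1"
    using assms(4,5,7) \<open>finite Z\<close> bounded \<open>0 \<le> Max Z\<close> \<open>0 \<le> \<mu>\<close> params
    by (intro card_subsetSums_pair_le) auto
  moreover have "0 < 1 - (2 * \<epsilon> + 4 * \<mu>)" using assms(8) \<open>\<mu> \<le> 1/16\<close> by linarith
  ultimately show ?thesis
    unfolding t_def[symmetric] \<mu>_def[symmetric] assms(4)[symmetric]
    by (simp add: pos_le_divide_eq diff_diff_eq)
qed

end
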